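(* Let $\phi=\sum_{n=-\infty}^{\infty}a_ne_n\in L^\infty$ and suppose $V_\phi^*$ is an isometry on $H^2$. Then $\sum_{n=-\infty}^{\infty}|a_n|^2=1$.
   Context: $L^2=L^2(\mathbb{T})$ with orthonormal basis $e_n(z)=z^n$, $n\in\mathbb{Z}$; $H^2$ is the closed span of $\{e_n\}_{n\ge0}$, $P:L^2\to H^2$ the orthogonal projection, $M_\phi$ multiplication by $\phi$. $W:L^2\to L^2$: $We_n=e_{n/2}$ for $n$ even, $0$ for $n$ odd. $K:H^2\to L^2$: $Ke_{2n}=e_n$, $Ke_{2n+1}=e_{-n-1}$ ($n\ge0$). The slant H-Toeplitz operator is $V_\phi=WPM_\phi K:H^2\to H^2$. *)

theory Defs
  imports "HOL-Analysis.Analysis"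
begin

text \<open>The circle is parametrised by t in [0, 2 pi] via cis t; Lebesgue measure normalised by 1/(2 pi).
  Elements of L2 are represented by their coefficient sequences w.r.t. the orthonormal basis e_n
  (int \<Rightarrow> complex, square summable); elements of H2 by nat \<Rightarrow> complex.\<close>

definition circ_Linf :: "(complex \<Rightarrow> complex) \<Rightarrow> bool" where
  "circ_Linf \<phi> \<longleftrightarrow>
     (\<lambda>t. \<phi> (cis t)) \<in> borel_measurable (restrict_space lborel {0..2*pi}) \<and>
     (\<exists>C. AE t in lborel. t \<in> {0..2*pi} \<longrightarrow> cmod (\<phi> (cis t)) \<le> C)"

definition fourier_coeff :: "(complex \<Rightarrow> complex) \<Rightarrow> int \<Rightarrow> complex" where
  "fourier_coeff \<phi> n =
     (1 / (2*pi)) *\<^sub>R (LINT t:{0..2*pi}|lborel. \<phi> (cis t) * cis (- (of_int n * t)))"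

definition l2Z :: "(int \<Rightarrow> complex) set" where
  "l2Z = {f. (\<lambda>n. (cmod (f n))\<^sup>2) summable_on UNIV}"

definition H2 :: "(nat \<Rightarrow> complex) set" where
  "H2 = {f. (\<lambda>n. (cmod (f n))\<^sup>2) summable_on UNIV}"

definition h2_inner :: "(nat \<Rightarrow> complex) \<Rightarrow> (nat \<Rightarrow> complex) \<Rightarrow> complex" where
  "h2_inner f g = infsum (\<lambda>n. f n * cnj (g n)) UNIV"

definition h2_norm :: "(nat \<Rightarrow> complex) \<Rightarrow> real" where
  "h2_norm f = sqrt (infsum (\<lambda>n. (cmod (f n))\<^sup>2) UNIV)"

text \<open>K e_{2n} = e_n, K e_{2n+1} = e_{-n-1}, on coefficients.\<close>
definition K_op :: "(nat \<Rightarrow> complex) \<Rightarrow> (int \<Rightarrow> complex)" where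
  "K_op f j = (if j \<ge> 0 then f (nat (2*j)) else f (nat (-2*j - 1)))"

text \<open>Multiplication by phi = sum a_n e_n, on coefficients (convolution).\<close>
definition M_op :: "(int \<Rightarrow> complex) \<Rightarrow> (int \<Rightarrow> complex) \<Rightarrow> (int \<Rightarrow> complex)" where
  "M_op a g n = infsum (\<lambda>k. a (n - k) * g k) UNIV"

definition P_op :: "(int \<Rightarrow> complex) \<Rightarrow> (int \<Rightarrow> complex)" where
  "P_op g n = (if n \<ge> 0 then g n else 0)"

text \<open>W e_n = e_{n/2} for n even, 0 for n odd, on coefficients.\<close>
definition W_op :: "(int \<Rightarrow> complex) \<Rightarrow> (int \<Rightarrow> complex)" where
  "W_op g n = g (2*n)"

definition slant_HT :: "(int \<Rightarrow> complex) \<Rightarrow> (nat \<Rightarrow> complex) \<Rightarrow> (nat \<Rightarrow> complex)" where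
  "slant_HT a f = (\<lambda>m. W_op (P_op (M_op a (K_op f))) (int m))"

definition adjoint_H2 :: "((nat \<Rightarrow> complex) \<Rightarrow> (nat \<Rightarrow> complex)) \<Rightarrow> (nat \<Rightarrow> complex) \<Rightarrow> (nat \<Rightarrow> complex)" where
  "adjoint_H2 T g = (THE h. h \<in> H2 \<and> (\<forall>f\<in>H2. h2_inner (T f) g = h2_inner f h))"

definition isometry_H2 :: "((nat \<Rightarrow> complex) \<Rightarrow> (nat \<Rightarrow> complex)) \<Rightarrow> bool" where
  "isometry_H2 S \<longleftrightarrow> (\<forall>g\<in>H2. S g \<in> H2 \<and> h2_norm (S g) = h2_norm g)"

end

theory Submission
  imports Defs
begin

(* Testing the adjoint against e_0 gives <V_phi f, e_0> = (V_phi f)_0 = sum_k a_(-k) (K f)_k, and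
   reindexing by the bijection K makes this <f, h> with h_j = cnj (a_(-K(j))), where K e_j = e_(K(j)).
   Hence V_phi^* e_0 = h, whose H^2 norm is the l^2 norm of the Fourier coefficients (finite by
   Bessel's inequality for the orthogonal system e_n on the circle). Since V_phi^* is an isometry,
   this norm equals |e_0| = 1. *)

definition ess_bounded :: "'a measure \<Rightarrow> ('a \<Rightarrow> complex) \<Rightarrow> bool" where
  "ess_bounded M f \<longleftrightarrow> f \<in> borel_measurable M \<and> (\<exists>C. AE x in M. norm (f x) \<le> C)"

lemma (in finite_measure) integrable_ess_bounded: "ess_bounded M f \<Longrightarrow> integrable M f"
  unfolding ess_bounded_def using integrable_const_bound by blast

lemma ess_bounded_const: "ess_bounded M (\<lambda>x. c)"
  unfolding ess_bounded_def by auto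

lemma ess_bounded_cnj:
  assumes "ess_bounded M f" shows "ess_bounded M (\<lambda>x. cnj (f x))"
proof -
  have "continuous_on UNIV cnj"
    by (intro continuous_intros)
  from borel_measurable_continuous_on[OF this] assms show ?thesis
    unfolding ess_bounded_def by auto
qed

lemma ess_bounded_add: "ess_bounded M f \<Longrightarrow> ess_bounded M g \<Longrightarrow> ess_bounded M (\<lambda>x. f x + g x)"
  unfolding ess_bounded_def
proof (elim conjE exE, intro conjI exI)
  fix C D assume "AE x in M. norm (f x) \<le> C" "AE x in M. norm (g x) \<le> D"
  then show "AE x in M. norm (f x + g x) \<le> C + D"
    by eventually_elim (intro norm_triangle_le add_mono)
qed auto

lemma ess_bounded_mult: "ess_bounded M f \<Longrightarrow> ess_bounded M g \<Longrightarrow> ess_bounded M (\<lambda>x. f x * g x)"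
  unfolding ess_bounded_def
proof (elim conjE exE, intro conjI exI)
  fix C D assume "AE x in M. norm (f x) \<le> C" "AE x in M. norm (g x) \<le> D"
  then show "AE x in M. norm (f x * g x) \<le> C * D"
    by eventually_elim (auto simp: norm_mult intro: mult_mono order_trans[OF norm_ge_zero])
qed auto

lemma ess_bounded_sum:
  "finite F \<Longrightarrow> (\<And>i. i \<in> F \<Longrightarrow> ess_bounded M (f i)) \<Longrightarrow> ess_bounded M (\<lambda>x. \<Sum>i\<in>F. f i x)"
  by (induction F rule: finite_induct) (auto intro: ess_bounded_add ess_bounded_const)

lemmas ess_bounded_intros =
  ess_bounded_const ess_bounded_cnj ess_bounded_add ess_bounded_mult ess_bounded_sum

lemma integral_cmod_sq: "(LINT x|M. f x * cnj (f x)) = of_real (LINT x|M. (cmod (f x))\<^sup>2)"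
  unfolding complex_norm_square[symmetric] integral_complex_of_real ..

lemma (in finite_measure) integral_cmod_diff_sq:
  assumes "ess_bounded M f" and "ess_bounded M g"
  shows "of_real (LINT x|M. (cmod (f x - g x))\<^sup>2)
    = (LINT x|M. f x * cnj (f x)) - (LINT x|M. f x * cnj (g x))
      - cnj (LINT x|M. f x * cnj (g x)) + (LINT x|M. g x * cnj (g x))"
proof -
  have "of_real (LINT x|M. (cmod (f x - g x))\<^sup>2) = (LINT x|M. (f x - g x) * cnj (f x - g x))"
    by (rule integral_cmod_sq[symmetric])
  also have "\<dots> = (LINT x|M. f x * cnj (f x) - f x * cnj (g x)
                               - cnj (f x * cnj (g x)) + g x * cnj (g x))"
    by (intro Bochner_Integration.integral_cong) (simp_all add: algebra_simps)
  also have "\<dots> = (LINT x|M. f x * cnj (f x)) - (LINT x|M. f x * cnj (g x))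
      - cnj (LINT x|M. f x * cnj (g x)) + (LINT x|M. g x * cnj (g x))"
    using assms by (simp add: integrable_ess_bounded ess_bounded_intros del: complex_cnj_mult)
  finally show ?thesis .
qed

lemma (in finite_measure) integral_orthogonal_sum_sq:
  fixes e :: "'i \<Rightarrow> 'a \<Rightarrow> complex" and c :: real
  assumes F: "finite F" and e: "\<And>n. ess_bounded M (e n)"
    and orth: "\<And>n m. (LINT x|M. e n x * cnj (e m x)) = (if n = m then c else 0)"
  shows "(LINT x|M. (\<Sum>n\<in>F. b n * e n x) * cnj (\<Sum>n\<in>F. b n * e n x))
    = c * (\<Sum>n\<in>F. (cmod (b n))\<^sup>2)"
proof -
  have "(LINT x|M. (\<Sum>n\<in>F. b n * e n x) * cnj (\<Sum>n\<in>F. b n * e n x))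
      = (LINT x|M. (\<Sum>n\<in>F. \<Sum>m\<in>F. b n * cnj (b m) * (e n x * cnj (e m x))))"
    by (simp add: cnj_sum sum_product mult_ac)
  also have "\<dots> = (\<Sum>n\<in>F. \<Sum>m\<in>F. b n * cnj (b m) * (LINT x|M. e n x * cnj (e m x)))"
    using e by (simp add: integrable_ess_bounded ess_bounded_intros)
  also have "\<dots> = (\<Sum>n\<in>F. c * (b n * cnj (b n)))"
    unfolding orth
    by (intro sum.cong refl)
      (simp add: F if_distrib[of complex_of_real] if_distrib[of "\<lambda>z. _ * z"] mult_ac cong: if_cong)
  also have "\<dots> = c * (\<Sum>n\<in>F. (cmod (b n))\<^sup>2)"
    unfolding of_real_mult of_real_sum sum_distrib_left by (simp only: complex_norm_square)
  finally show ?thesis .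
qed

lemma (in finite_measure) bessel_inequality:
  fixes e :: "'i \<Rightarrow> 'a \<Rightarrow> complex" and f :: "'a \<Rightarrow> complex" and c :: real
  assumes F: "finite F" and "c > 0"
    and f: "ess_bounded M f" and e: "\<And>n. ess_bounded M (e n)"
    and orth: "\<And>n m. (LINT x|M. e n x * cnj (e m x)) = (if n = m then c else 0)"
  shows "(\<Sum>n\<in>F. (cmod (LINT x|M. f x * cnj (e n x)))\<^sup>2) \<le> c * (LINT x|M. (cmod (f x))\<^sup>2)"
proof -
  define b where "b n = (LINT x|M. f x * cnj (e n x))" for n
  define B where "B = (\<Sum>n\<in>F. (cmod (b n))\<^sup>2)"
  define S where "S x = (\<Sum>n\<in>F. b n * e n x)" for x
  have S: "ess_bounded M S"
    unfolding S_def using F e by (intro ess_bounded_intros)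
  have fS: "(LINT x|M. f x * cnj (S x)) = B"
  proof -
    have "(LINT x|M. f x * cnj (S x)) = (LINT x|M. (\<Sum>n\<in>F. cnj (b n) * (f x * cnj (e n x))))"
      unfolding S_def by (simp add: cnj_sum sum_distrib_left mult_ac)
    also have "\<dots> = (\<Sum>n\<in>F. b n * cnj (b n))"
      unfolding b_def using f e by (simp add: integrable_ess_bounded ess_bounded_intros mult.commute)
    also have "\<dots> = B"
      unfolding B_def of_real_sum by (simp only: complex_norm_square)
    finally show ?thesis .
  qed
  have SS: "(LINT x|M. S x * cnj (S x)) = c * B"
    unfolding S_def B_def using F e orth by (rule integral_orthogonal_sum_sq)
  have "of_real (LINT x|M. (cmod (c * f x - S x))\<^sup>2)
      = (LINT x|M. c * f x * cnj (c * f x)) - (LINT x|M. c * f x * cnj (S x))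
        - cnj (LINT x|M. c * f x * cnj (S x)) + (LINT x|M. S x * cnj (S x))"
    using f S by (intro integral_cmod_diff_sq ess_bounded_intros)
  also have "\<dots> = of_real (c\<^sup>2 * (LINT x|M. (cmod (f x))\<^sup>2) - c * B)"
    using fS SS by (simp add: mult_ac integral_cmod_sq power2_eq_square)
  finally have "(LINT x|M. (cmod (c * f x - S x))\<^sup>2)
      = c\<^sup>2 * (LINT x|M. (cmod (f x))\<^sup>2) - c * B"
    by (simp only: of_real_eq_iff)
  moreover have "0 \<le> (LINT x|M. (cmod (c * f x - S x))\<^sup>2)"
    by (simp add: integral_nonneg_AE)
  ultimately have "c * B \<le> c * (c * (LINT x|M. (cmod (f x))\<^sup>2))"
    by (simp add: power2_eq_square)
  with \<open>c > 0\<close> have "B \<le> c * (LINT x|M. (cmod (f x))\<^sup>2)"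
    by simp
  then show ?thesis
    unfolding B_def b_def .
qed

definition circle_measure :: "real measure" where
  "circle_measure = restrict_space lborel {0..2*pi}"

lemma finite_measure_circle_measure: "finite_measure circle_measure"
  unfolding circle_measure_def
  by (intro finite_measureI) (simp add: space_restrict_space emeasure_restrict_space)

lemma set_integral_eq_circle_measure:
  "(LINT t:{0..2*pi}|lborel. f t) = integral\<^sup>L circle_measure (f :: real \<Rightarrow> complex)"
  unfolding circle_measure_def set_lebesgue_integral_def
  by (rule sym, subst integral_restrict_space) auto

lemma integral_cis_int:
  fixes k :: int
  shows "(LINT t|circle_measure. cis (k * t)) = (if k = 0 then 2*pi else 0)"
proof (cases "k = 0")
  case True
  then have "(LINT t|circle_measure. cis (k * t)) = (LINT t:{0..2*pi}|lborel. 1)"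
    by (simp add: set_integral_eq_circle_measure)
  with True show ?thesis
    by (simp add: set_integral_const scaleR_conv_of_real)
next
  case False
  define F where "F t = cis (real_of_int k * t) / (\<i> * of_int k)" for t
  have "(LBINT t=ereal 0..ereal (2*pi). cis (real_of_int k * t)) = F (2*pi) - F 0"
  proof (rule interval_integral_FTC_finite)
    show "continuous_on {min 0 (2*pi)..max 0 (2*pi)} (\<lambda>t. cis (real_of_int k * t))"
      by (intro continuous_intros)
    fix t
    have "(F has_derivative (\<lambda>s. s *\<^sub>R cis (real_of_int k * t)))
        (at t within {min 0 (2*pi)..max 0 (2*pi)})"
      unfolding F_def using False
      by (auto intro!: derivative_eq_intros simp: field_simps scaleR_conv_of_real)
    then show "(F has_vector_derivative cis (real_of_int k * t))
        (at t within {min 0 (2*pi)..max 0 (2*pi)})"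
      by (simp add: has_vector_derivative_def)
  qed
  also have "F (2*pi) = F 0"
    using cis_multiple_2pi[of k] unfolding F_def by (simp add: mult_ac)
  finally show ?thesis
    using False by (simp add: interval_integral_Icc set_integral_eq_circle_measure)
qed

lemma ess_bounded_cis: "ess_bounded circle_measure (\<lambda>t. cis (r * t))"
proof -
  have "continuous_on UNIV (\<lambda>t. cis (r * t))"
    by (intro continuous_intros)
  then show ?thesis
    unfolding ess_bounded_def circle_measure_def
    by (auto intro!: measurable_restrict_space1 borel_measurable_continuous_onI)
qed

lemma ess_bounded_circ_Linf:
  assumes "circ_Linf \<phi>" shows "ess_bounded circle_measure (\<lambda>t. \<phi> (cis t))"
proof -
  from assms obtain C where
    "(\<lambda>t. \<phi> (cis t)) \<in> borel_measurable circle_measure"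
    "AE t in lborel. t \<in> {0..2*pi} \<longrightarrow> cmod (\<phi> (cis t)) \<le> C"
    unfolding circ_Linf_def circle_measure_def by blast
  then show ?thesis
    unfolding ess_bounded_def circle_measure_def by (auto simp: AE_restrict_space_iff)
qed

lemma fourier_coeff_eq_integral:
  "2 * pi * fourier_coeff \<phi> n = (LINT t|circle_measure. \<phi> (cis t) * cnj (cis (n * t)))"
  unfolding fourier_coeff_def set_integral_eq_circle_measure
  by (simp add: scaleR_conv_of_real cis_cnj)

lemma summable_fourier_coeff_sq:
  assumes "circ_Linf \<phi>"
  shows "(\<lambda>n. (cmod (fourier_coeff \<phi> n))\<^sup>2) summable_on UNIV"
proof (rule nonneg_bdd_above_summable_on)
  define I where "I = (LINT t|circle_measure. (cmod (\<phi> (cis t)))\<^sup>2)"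
  have "(\<Sum>n\<in>F. (cmod (fourier_coeff \<phi> n))\<^sup>2) \<le> I / (2*pi)" if "finite F" for F
  proof -
    have orth: "(LINT t|circle_measure. cis (n * t) * cnj (cis (m * t))) = (if n = m then 2*pi else 0)"
      for n m :: int
      using integral_cis_int[of "n - m"] by (simp add: cis_cnj cis_mult algebra_simps)
    have "(\<Sum>n\<in>F. (cmod (2 * pi * fourier_coeff \<phi> n))\<^sup>2) \<le> 2 * pi * I"
      unfolding fourier_coeff_eq_integral I_def
      using finite_measure.bessel_inequality[OF finite_measure_circle_measure \<open>finite F\<close> _
          ess_bounded_circ_Linf[OF assms] ess_bounded_cis orth]
      by simp
    then have "2*pi * (2*pi * (\<Sum>n\<in>F. (cmod (fourier_coeff \<phi> n))\<^sup>2)) \<le> 2*pi * I"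
      by (simp add: norm_mult power_mult_distrib sum_distrib_left power2_eq_square mult_ac)
    then show ?thesis
      by (simp add: field_simps)
  qed
  then show "bdd_above (sum (\<lambda>n. (cmod (fourier_coeff \<phi> n))\<^sup>2) ` {F. F \<subseteq> UNIV \<and> finite F})"
    unfolding bdd_above_def by blast
qed auto

definition K_index :: "nat \<Rightarrow> int" where
  "K_index j = (if even j then int (j div 2) else - int (j div 2) - 1)"

lemma K_op_K_index: "K_op f (K_index j) = f j"
proof (cases "even j")
  case True
  then obtain i where "j = 2 * i" by (auto elim!: evenE)
  then show ?thesis unfolding K_index_def K_op_def by (simp add: nat_mult_distrib)
next
  case False
  then obtain i where "j = 2 * i + 1" by (auto elim!: oddE)
  moreover have "nat (2 * (int i + 1) - 1) = 2 * i + 1" by simp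
  ultimately show ?thesis unfolding K_index_def K_op_def by simp
qed

lemma bij_K_index: "bij_betw K_index UNIV UNIV"
proof (rule bij_betwI[where g = "\<lambda>k. if k \<ge> 0 then nat (2*k) else nat (-2*k - 1)"])
  fix j :: nat
  show "(if K_index j \<ge> 0 then nat (2 * K_index j) else nat (-2 * K_index j - 1)) = j"
    unfolding K_index_def by (auto elim!: evenE oddE)
next
  fix k :: int
  show "K_index (if k \<ge> 0 then nat (2*k) else nat (-2*k - 1)) = k"
  proof (cases "k \<ge> 0")
    case True
    then have "nat (2*k) = 2 * nat k" by (simp add: nat_mult_distrib)
    with True show ?thesis unfolding K_index_def by simp
  next
    case False
    then have "nat (-2*k - 1) = 2 * nat (- k - 1) + 1" by (simp add: nat_mult_distrib)
    with False show ?thesis unfolding K_index_def by simp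
  qed
qed auto

lemma bij_uminus_K_index: "bij_betw (\<lambda>j. - K_index j) UNIV UNIV"
  using bij_betw_trans[OF bij_K_index bij_uminus] by (simp add: comp_def)

definition h2_basis :: "nat \<Rightarrow> nat \<Rightarrow> complex" where
  "h2_basis j n = (if n = j then 1 else 0)"

lemma has_sum_single_support:
  fixes f :: "'a \<Rightarrow> 'b::{topological_comm_monoid_add,t2_space}"
  assumes "\<And>n. n \<noteq> j \<Longrightarrow> f n = 0"
  shows "(f has_sum f j) UNIV"
  using assms by (intro has_sum_finite_neutralI[of "{j}"]) auto

lemma h2_basis_in_H2: "h2_basis j \<in> H2"
  unfolding H2_def
  using has_sum_single_support[of j "\<lambda>n. (cmod (h2_basis j n))\<^sup>2"]
  by (auto simp: h2_basis_def dest: has_sum_imp_summable)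

lemma h2_inner_basis_left: "h2_inner (h2_basis j) f = cnj (f j)"
  unfolding h2_inner_def
  using has_sum_single_support[of j "\<lambda>n. h2_basis j n * cnj (f n)"]
  by (simp add: h2_basis_def infsumI)

lemma h2_inner_basis_right: "h2_inner f (h2_basis j) = f j"
  unfolding h2_inner_def
  using has_sum_single_support[of j "\<lambda>n. f n * cnj (h2_basis j n)"]
  by (simp add: h2_basis_def infsumI)

lemma h2_norm_basis: "h2_norm (h2_basis j) = 1"
  unfolding h2_norm_def
  using has_sum_single_support[of j "\<lambda>n. (cmod (h2_basis j n))\<^sup>2"]
  by (simp add: h2_basis_def infsumI)

lemma adjoint_H2_eqI:
  assumes "h \<in> H2" and adj: "\<And>f. f \<in> H2 \<Longrightarrow> h2_inner (T f) g = h2_inner f h"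
  shows "adjoint_H2 T g = h"
  unfolding adjoint_H2_def
proof (rule the_equality)
  fix h' assume h': "h' \<in> H2 \<and> (\<forall>f\<in>H2. h2_inner (T f) g = h2_inner f h')"
  show "h' = h"
  proof
    fix j
    from h' adj[OF h2_basis_in_H2] have "cnj (h' j) = cnj (h j)"
      by (simp add: h2_basis_in_H2 h2_inner_basis_left)
    then show "h' j = h j" by simp
  qed
qed (use assms in blast)

lemma slant_HT_at_0: "slant_HT a f 0 = h2_inner f (\<lambda>j. cnj (a (- K_index j)))"
proof -
  have "slant_HT a f 0 = infsum (\<lambda>k. a (- k) * K_op f k) UNIV"
    unfolding slant_HT_def W_op_def P_op_def M_op_def by simp
  also have "\<dots> = infsum (\<lambda>j. a (- K_index j) * K_op f (K_index j)) UNIV"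
    by (rule infsum_reindex_bij_betw[OF bij_K_index, symmetric])
  finally show ?thesis
    unfolding h2_inner_def K_op_K_index by (simp add: mult.commute)
qed

lemma adjoint_slant_HT_basis_0:
  assumes "(\<lambda>n. (cmod (a n))\<^sup>2) summable_on UNIV"
  shows "adjoint_H2 (slant_HT a) (h2_basis 0) = (\<lambda>j. cnj (a (- K_index j)))"
proof (rule adjoint_H2_eqI)
  from assms show "(\<lambda>j. cnj (a (- K_index j))) \<in> H2"
    unfolding H2_def
    by (simp add: summable_on_reindex_bij_betw[OF bij_uminus_K_index,
                    where f = "\<lambda>n. (cmod (a n))\<^sup>2"])
qed (simp add: h2_inner_basis_right slant_HT_at_0)

lemma h2_norm_cnj_K_reindex:
  "h2_norm (\<lambda>j. cnj (a (- K_index j))) = sqrt (infsum (\<lambda>n. (cmod (a n))\<^sup>2) UNIV)"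
  unfolding h2_norm_def
  by (simp add: infsum_reindex_bij_betw[OF bij_uminus_K_index,
                  where f = "\<lambda>n. (cmod (a n))\<^sup>2"])

theorem mainTheorem4:
  fixes \<phi> :: "complex \<Rightarrow> complex"
  assumes "circ_Linf \<phi>"
    and "isometry_H2 (adjoint_H2 (slant_HT (fourier_coeff \<phi>)))"
  shows "infsum (\<lambda>n. (cmod (fourier_coeff \<phi> n))\<^sup>2) UNIV = 1"
proof -
  let ?h = "\<lambda>j. cnj (fourier_coeff \<phi> (- K_index j))"
  have "adjoint_H2 (slant_HT (fourier_coeff \<phi>)) (h2_basis 0) = ?h"
    using adjoint_slant_HT_basis_0 summable_fourier_coeff_sq[OF assms(1)] .
  with assms(2) h2_basis_in_H2 have "h2_norm ?h = h2_norm (h2_basis 0)"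
    unfolding isometry_H2_def by metis
  then have "sqrt (infsum (\<lambda>n. (cmod (fourier_coeff \<phi> n))\<^sup>2) UNIV) = 1"
    by (simp add: h2_norm_cnj_K_reindex h2_norm_basis)
  then show ?thesis
    by simp
qed

end
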